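(* For all $x\in\left[0,\frac{\pi_{6/5,3/2}}{4}\right)$, $$\sin_{6/5,3/2}(2x)=(\Theta\circ\Phi\circ\Psi)(\cos_{6/5,3/2}x),$$ where $$\Theta(x)=\left(\frac{2x}{1+x}\right)^{2/3},\qquad \Phi(x)=\frac{8\sqrt{x(3x+1)^3(1-x)}}{16x+(3x+1)^3(1-x)},\qquad \Psi(x)=\frac{2x^{3/5}}{1+x^{6/5}}.$$
   Context: For $0<q<\infty$ and $\frac{q}{q+1}<p<\infty$: let $F_{p,q}(y)=\int_0^y (1-t^q)^{-1/p}\,dt$ for $y\in[0,1)$ and $\pi_{p,q}=2\int_0^1(1-t^q)^{-1/p}\,dt$. The function $\sin_{p,q}:[0,\pi_{p,q}/2)\to[0,1)$ is the inverse of $F_{p,q}$ and $\cos_{p,q}x=\frac{d}{dx}\sin_{p,q}x$. Here $(p,q)=(6/5,3/2)$, so $\pi_{6/5,3/2}=2\int_0^1(1-t^{3/2})^{-5/6}\,dt<\infty$. *)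

theory Defs
  imports "HOL-Analysis.Analysis"
begin

definition F_pq :: "real \<Rightarrow> real \<Rightarrow> real \<Rightarrow> real" where
  "F_pq p q y = integral {0..y} (\<lambda>t. (1 - t powr q) powr (-1/p))"

definition pi_pq :: "real \<Rightarrow> real \<Rightarrow> real" where
  "pi_pq p q = 2 * integral {0..1} (\<lambda>t. (1 - t powr q) powr (-1/p))"

definition sin_pq :: "real \<Rightarrow> real \<Rightarrow> real \<Rightarrow> real" where
  "sin_pq p q x = (THE y. y \<in> {0..<1} \<and> F_pq p q y = x)"

definition cos_pq :: "real \<Rightarrow> real \<Rightarrow> real \<Rightarrow> real" where
  "cos_pq p q x = (THE c. (sin_pq p q has_real_derivative c)
                          (at x within {0..<pi_pq p q / 2}))"

definition Theta :: "real \<Rightarrow> real" where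
  "Theta x = (2 * x / (1 + x)) powr (2/3)"

definition Phi :: "real \<Rightarrow> real" where
  "Phi x = 8 * sqrt (x * (3*x + 1)^3 * (1 - x)) / (16 * x + (3*x + 1)^3 * (1 - x))"

definition Psi :: "real \<Rightarrow> real" where
  "Psi x = 2 * x powr (3/5) / (1 + x powr (6/5))"

end

theory Submission
  imports Defs
begin

text \<open>
  Write \<open>x = F s\<close> with \<open>s = sin x\<close> in \<open>[0,1)\<close>. Then \<open>cos x = (1 - s^(3/2))^(5/6)\<close>, so
  \<open>\<Psi> (cos x) = 2 sqrt (1 - s^(3/2)) / (2 - s^(3/2))\<close>, and the claim becomes \<open>F (G s) = 2 F s\<close>
  for \<open>G = \<Theta> \<circ> \<Phi> \<circ> \<Psi> \<circ> cos \<circ> F\<close>. Both sides vanish at \<open>s = 0\<close>, so it suffices that \<open>G\<close>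
  pulls the weight \<open>(1 - t^(3/2))^(-5/6)\<close> of \<open>F\<close> back to twice itself. This factors through
  the three maps: \<open>\<Theta>\<close> pulls it back to a multiple of \<open>v^(-1/3) (1 - v^2)^(-5/6)\<close>, \<open>\<Phi>\<close>
  pulls that back to a multiple of \<open>z^(-2/3) (1 - z^2)^(-2/3)\<close>, and \<open>\<Psi> \<circ> cos \<circ> F\<close> pulls this
  back to a multiple of the original weight; each identity is checked on sixth powers, where all
  fractional exponents disappear. The identity for \<open>\<Phi>\<close> needs \<open>\<Psi> (cos x) > 1/3\<close>, i.e. it holds
  until \<open>\<Phi>\<close> reaches its maximum \<open>1\<close>, which happens exactly at \<open>x = \<pi>/4\<close>.
\<close>

section \<open>The integral \<open>F_pq\<close> and its inverse \<open>sin_pq\<close>\<close>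

definition pq_weight :: "real \<Rightarrow> real \<Rightarrow> real \<Rightarrow> real" where
  "pq_weight p q t = (1 - t powr q) powr (-1/p)"

lemma F_pq_eq_integral: "F_pq p q y = integral {0..y} (pq_weight p q)"
  by (simp add: F_pq_def pq_weight_def[abs_def])

lemma pi_pq_eq_F_pq: "pi_pq p q = 2 * F_pq p q 1"
  by (simp add: F_pq_def pi_pq_def)

context
  fixes p q :: real
  assumes p_gt_1: "1 < p" and q_ge_1: "1 \<le> q"
begin

lemma powr_q_less_one: "0 \<le> t \<Longrightarrow> t < 1 \<Longrightarrow> t powr q < 1"
  using powr01_less_one[of t q] q_ge_1 by (cases "t = 0") auto

lemma pq_weight_pos: "0 \<le> t \<Longrightarrow> t < 1 \<Longrightarrow> 0 < pq_weight p q t"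
  using powr_q_less_one[of t] by (simp add: pq_weight_def)

lemma continuous_on_pq_weight: "continuous_on {0..<1} (pq_weight p q)"
  unfolding pq_weight_def[abs_def] using powr_q_less_one q_ge_1
  by (intro continuous_on_powr continuous_on_powr' continuous_intros) force+

lemma pq_weight_le:
  assumes "0 \<le> t" "t < 1"
  shows "pq_weight p q t \<le> (1 - t) powr (-1/p)"
proof -
  have "t powr q \<le> t"
    using powr_mono'[of 1 q t] assms q_ge_1 by simp
  then show ?thesis
    unfolding pq_weight_def using assms p_gt_1 by (intro powr_mono2') auto
qed

lemma has_integral_one_minus_powr:
  "((\<lambda>t. (1 - t) powr (-1/p)) has_integral p / (p - 1)) {0..1}"
proof -
  define r where "r = 1 - 1/p"
  define G where "G t = - ((1 - t) powr r) / r" for t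
  have r: "0 < r" "r - 1 = -1/p"
    using p_gt_1 by (auto simp: r_def)
  have "((\<lambda>t. (1 - t) powr (-1/p)) has_integral (G 1 - G 0)) {0..1}"
  proof (rule fundamental_theorem_of_calculus_interior)
    show "continuous_on {0..1} G"
      unfolding G_def[abs_def] using r by (intro continuous_on_powr' continuous_intros) auto
    fix t :: real assume "t \<in> {0<..<1}"
    then have "(G has_real_derivative (1 - t) powr (-1/p)) (at t)"
      unfolding G_def[abs_def] using r by (auto intro!: derivative_eq_intros)
    then show "(G has_vector_derivative (1 - t) powr (-1/p)) (at t)"
      by (simp add: has_real_derivative_iff_has_vector_derivative)
  qed simp
  moreover have "G 1 - G 0 = p / (p - 1)"
    using p_gt_1 by (simp add: G_def r_def field_simps)
  ultimately show ?thesis by simp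
qed

lemma pq_weight_integrable: "pq_weight p q integrable_on {0..1}"
proof -
  have negl: "negligible (sym_diff {0..<1::real} {0..1})"
    by (rule negligible_subset[of "{1}"]) auto
  have "pq_weight p q integrable_on {0..<1}"
  proof (rule measurable_bounded_by_integrable_imp_integrable_real)
    show "pq_weight p q \<in> borel_measurable (lebesgue_on {0..<1})"
      using continuous_on_pq_weight by (rule continuous_imp_measurable_on_sets_lebesgue) auto
    show "(\<lambda>t. (1 - t) powr (-1/p)) integrable_on {0..<1}"
      using has_integral_one_minus_powr integrable_spike_set_eq[OF negl] by blast
    show "\<bar>pq_weight p q t\<bar> \<le> (1 - t) powr (-1/p)" if "t \<in> {0..<1}" for t
      using that pq_weight_pos pq_weight_le by force
  qed auto
  then show ?thesis
    using integrable_spike_set_eq[OF negl] by blast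
qed

lemma continuous_on_F_pq: "continuous_on {0..1} (F_pq p q)"
  unfolding F_pq_eq_integral[abs_def]
  by (rule indefinite_integral_continuous_1[OF pq_weight_integrable])

lemma F_pq_has_derivative_within:
  assumes "0 \<le> s" "s < 1"
  shows "(F_pq p q has_real_derivative pq_weight p q s) (at s within {0..<1})"
proof -
  define b where "b = (1 + s) / 2"
  have "continuous_on {0..b} (pq_weight p q)"
    by (rule continuous_on_subset[OF continuous_on_pq_weight]) (use assms in \<open>auto simp: b_def\<close>)
  then have "(F_pq p q has_real_derivative pq_weight p q s) (at s within {0..b})"
    using integral_has_vector_derivative[of 0 b "pq_weight p q" s] assms
    unfolding F_pq_eq_integral[abs_def] has_real_derivative_iff_has_vector_derivative
    by (auto simp: b_def)
  moreover have "at s within {0..<1} = at s within {0..b}"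
    using assms by (intro at_within_nhd[of _ "{-1<..<b}"]) (auto simp: b_def)
  ultimately show ?thesis
    by (simp only:)
qed

lemma F_pq_has_derivative:
  assumes "0 < s" "s < 1"
  shows "(F_pq p q has_real_derivative pq_weight p q s) (at s)"
proof -
  have "at s within {0..<1} = at s"
    by (rule at_within_interior) (use assms in simp)
  then show ?thesis
    using F_pq_has_derivative_within[of s] assms by (simp only:)
qed

lemma F_pq_strict_mono: "strict_mono_on {0..1} (F_pq p q)"
proof (rule strict_mono_onI)
  fix a b :: real assume a: "a \<in> {0..1}" and b: "b \<in> {0..1}" and "a < b"
  show "F_pq p q a < F_pq p q b"
  proof (rule DERIV_pos_imp_increasing_open[OF \<open>a < b\<close>])
    fix x assume "a < x" "x < b"
    then have "0 < x" "x < 1"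
      using a b by auto
    then show "\<exists>y. (F_pq p q has_real_derivative y) (at x) \<and> 0 < y"
      using F_pq_has_derivative pq_weight_pos by (intro exI[of _ "pq_weight p q x"]) simp
  next
    show "continuous_on {a..b} (F_pq p q)"
      by (rule continuous_on_subset[OF continuous_on_F_pq]) (use a b in auto)
  qed
qed

lemma F_pq_image: "F_pq p q ` {0..<1} = {0..<pi_pq p q / 2}"
proof -
  have F0: "F_pq p q 0 = 0"
    by (simp add: F_pq_def)
  have "F_pq p q ` {0..<1} \<subseteq> {0..<F_pq p q 1}"
    using F_pq_strict_mono F0 by (force simp: strict_mono_on_def le_less)
  moreover have "{0..<F_pq p q 1} \<subseteq> F_pq p q ` {0..<1}"
  proof
    fix y assume "y \<in> {0..<F_pq p q 1}"
    then obtain s where "0 \<le> s" "s \<le> 1" "F_pq p q s = y"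
      using IVT'[of "F_pq p q" 0 y 1] continuous_on_F_pq F0 by auto
    then show "y \<in> F_pq p q ` {0..<1}"
      using \<open>y \<in> {0..<F_pq p q 1}\<close> by (cases "s = 1") auto
  qed
  ultimately show ?thesis
    by (auto simp: pi_pq_eq_F_pq)
qed

lemma F_pq_in_domain: "0 \<le> s \<Longrightarrow> s < 1 \<Longrightarrow> F_pq p q s \<in> {0..<pi_pq p q / 2}"
  unfolding F_pq_image[symmetric] by (intro imageI) simp

lemma sin_pq_F_pq:
  assumes "0 \<le> s" "s < 1"
  shows "sin_pq p q (F_pq p q s) = s"
  unfolding sin_pq_def
proof (rule the_equality)
  fix y assume "y \<in> {0..<1} \<and> F_pq p q y = F_pq p q s"
  then show "y = s"
    using strict_mono_on_eqD[OF F_pq_strict_mono] assms by auto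
qed (use assms in auto)

lemma continuous_on_sin_pq: "continuous_on {0..<pi_pq p q / 2} (sin_pq p q)"
proof -
  define g where "g = the_inv_into {0..1} (F_pq p q)"
  have inj: "inj_on (F_pq p q) {0..1}"
    by (rule strict_mono_on_imp_inj_on[OF F_pq_strict_mono])
  have "continuous_on (F_pq p q ` {0..1}) g"
    using continuous_on_F_pq by (rule continuous_on_inv) (auto simp: g_def the_inv_into_f_f[OF inj])
  then have "continuous_on (F_pq p q ` {0..<1}) g"
    by (rule continuous_on_subset) auto
  moreover have "g y = sin_pq p q y" if y: "y \<in> F_pq p q ` {0..<1}" for y
  proof -
    obtain s where "s \<in> {0..<1}" "y = F_pq p q s"
      using y by blast
    then show ?thesis
      using sin_pq_F_pq[of s] the_inv_into_f_f[OF inj, of s] by (simp add: g_def)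
  qed
  ultimately have "continuous_on (F_pq p q ` {0..<1}) (sin_pq p q)"
    using continuous_on_cong by fastforce
  then show ?thesis
    by (simp only: F_pq_image)
qed

lemma sin_pq_has_derivative:
  assumes "0 \<le> s" "s < 1"
  shows "(sin_pq p q has_real_derivative inverse (pq_weight p q s))
           (at (F_pq p q s) within {0..<pi_pq p q / 2})"
proof -
  have "(sin_pq p q has_derivative (*) (inverse (pq_weight p q s)))
          (at (F_pq p q s) within F_pq p q ` {0..<1})"
  proof (rule has_derivative_inverse_within)
    show "(F_pq p q has_derivative (*) (pq_weight p q s)) (at s within {0..<1})"
      using F_pq_has_derivative_within[OF assms] by (simp add: has_field_derivative_def)
    show "continuous (at (F_pq p q s) within F_pq p q ` {0..<1}) (sin_pq p q)"
      using continuous_on_sin_pq F_pq_in_domain[OF assms]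
      unfolding F_pq_image continuous_on_eq_continuous_within by blast
    show "(*) (inverse (pq_weight p q s)) \<circ> (*) (pq_weight p q s) = id"
      using pq_weight_pos[OF assms] by (auto simp: fun_eq_iff)
    show "s \<in> {0..<1}"
      using assms by simp
    show "linear ((*) (inverse (pq_weight p q s)))"
      by (rule linear_times)
    show "sin_pq p q (F_pq p q x) = x" if "x \<in> {0..<1}" for x
      using sin_pq_F_pq that by simp
  qed
  then show ?thesis
    unfolding F_pq_image has_field_derivative_def .
qed

lemma cos_pq_F_pq:
  assumes "0 \<le> s" "s < 1"
  shows "cos_pq p q (F_pq p q s) = (1 - s powr q) powr (1/p)"
proof -
  have "0 \<le> F_pq p q s" "F_pq p q s < pi_pq p q / 2"
    using F_pq_in_domain[OF assms] by simp_all
  then have "F_pq p q s islimpt {0..<pi_pq p q / 2}"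
    using islimpt_Ico[of 0 "pi_pq p q / 2" "F_pq p q s"] by (simp only: atLeastAtMost_iff simp_thms)
  then have nontrivial: "at (F_pq p q s) within {0..<pi_pq p q / 2} \<noteq> bot"
    by (metis trivial_limit_def trivial_limit_within)
  have "cos_pq p q (F_pq p q s) = inverse (pq_weight p q s)"
    unfolding cos_pq_def
  proof (rule the_equality)
    show "c = inverse (pq_weight p q s)"
      if "(sin_pq p q has_real_derivative c) (at (F_pq p q s) within {0..<pi_pq p q / 2})" for c
      using has_field_derivative_unique[OF that sin_pq_has_derivative[OF assms] nontrivial] .
  qed (rule sin_pq_has_derivative[OF assms])
  also have "\<dots> = (1 - s powr q) powr (1/p)"
    using powr_minus[of "1 - s powr q" "1/p"] by (simp add: pq_weight_def)
  finally show ?thesis .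
qed

lemma F_pq_comp_eq_mult:
  assumes "0 < b" "b \<le> 1"
    and G_cont: "continuous_on {0..b} G"
    and G_range: "G ` {0..b} \<subseteq> {0..1}"
    and "G 0 = 0"
    and G_interior: "\<And>s. 0 < s \<Longrightarrow> s < b \<Longrightarrow> 0 < G s \<and> G s < 1"
    and G_deriv: "\<And>s. 0 < s \<Longrightarrow> s < b \<Longrightarrow> (G has_real_derivative G' s) (at s)"
    and pullback: "\<And>s. 0 < s \<Longrightarrow> s < b \<Longrightarrow> pq_weight p q (G s) * G' s = c * pq_weight p q s"
    and s: "0 \<le> s" "s \<le> b"
  shows "F_pq p q (G s) = c * F_pq p q s"
proof -
  define H where "H s = F_pq p q (G s) - c * F_pq p q s" for s
  have "H s = H 0"
  proof (rule DERIV_isconst2[OF \<open>0 < b\<close> _ _ s])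
    have "continuous_on {0..b} (\<lambda>s. F_pq p q (G s))"
      by (rule continuous_on_compose2[OF continuous_on_F_pq G_cont G_range])
    moreover have "continuous_on {0..b} (F_pq p q)"
      by (rule continuous_on_subset[OF continuous_on_F_pq]) (use \<open>b \<le> 1\<close> in auto)
    ultimately show "continuous_on {0..b} H"
      unfolding H_def[abs_def] by (intro continuous_intros)
  next
    fix x assume x: "0 < x" "x < b"
    have "(H has_real_derivative pq_weight p q (G x) * G' x - c * pq_weight p q x) (at x)"
      unfolding H_def[abs_def] using x G_interior[OF x] \<open>b \<le> 1\<close>
      by (intro DERIV_diff DERIV_cmult DERIV_chain2[OF F_pq_has_derivative G_deriv] F_pq_has_derivative) auto
    then show "(H has_real_derivative 0) (at x)"
      using pullback[OF x] by simp
  qed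
  moreover have "H 0 = 0"
    by (simp add: H_def \<open>G 0 = 0\<close> F_pq_def)
  ultimately show ?thesis
    by (simp add: H_def)
qed

end

section \<open>Pulling the weight back through \<open>\<Theta>\<close>, \<open>\<Phi>\<close> and \<open>\<Psi>\<close>\<close>

lemma pq_weight_6_5_3_2: "pq_weight (6/5) (3/2) t = (1 - t powr (3/2)) powr (-5/6)"
  by (simp add: pq_weight_def)

lemma Theta_bounds:
  assumes "0 \<le> v" "v \<le> 1"
  shows "0 \<le> Theta v" "Theta v \<le> 1"
proof -
  have "0 \<le> 2 * v / (1 + v)" "2 * v / (1 + v) \<le> 1"
    using assms by (auto simp: field_simps)
  then show "0 \<le> Theta v" "Theta v \<le> 1"
    unfolding Theta_def using powr_mono2[of "2/3" "2 * v / (1 + v)" 1] by auto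
qed

lemma Theta_strict_bounds:
  assumes "0 < v" "v < 1"
  shows "0 < Theta v" "Theta v < 1"
proof -
  have "0 < 2 * v / (1 + v)" "2 * v / (1 + v) < 1"
    using assms by (auto simp: field_simps)
  then show "0 < Theta v" "Theta v < 1"
    unfolding Theta_def using powr_less_mono2[of "2/3" "2 * v / (1 + v)" 1] by auto
qed

lemma continuous_on_Theta: "continuous_on {0..1} Theta"
  unfolding Theta_def[abs_def]
  by (intro continuous_on_powr' continuous_intros) (auto simp: add_nonneg_eq_0_iff)

definition Theta_deriv :: "real \<Rightarrow> real" where
  "Theta_deriv v = (4/3) * (2 * v / (1 + v)) powr (-1/3) / (1 + v)^2"

lemma Theta_has_derivative:
  assumes "0 < v"
  shows "(Theta has_real_derivative Theta_deriv v) (at v)"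
proof -
  have "((\<lambda>v. 2 * v / (1 + v)) has_real_derivative 2 / (1 + v)^2) (at v)"
    using assms by (auto intro!: derivative_eq_intros simp: field_simps power2_eq_square)
  from DERIV_chain2[OF has_real_derivative_powr[of "2 * v / (1 + v)" "2/3"] this]
  show ?thesis
    using assms unfolding Theta_def[abs_def] Theta_deriv_def by simp
qed

definition Theta_weight :: "real \<Rightarrow> real" where
  "Theta_weight v = v powr (-1/3) * (1 - v^2) powr (-5/6)"

lemma Theta_pullback:
  assumes "0 < v" "v < 1"
  shows "pq_weight (6/5) (3/2) (Theta v) * Theta_deriv v = (2/3) * 2 powr (2/3) * Theta_weight v"
proof (rule power_eq_imp_eq_base[of _ 6])
  have "(Theta v) powr (3/2) = 2 * v / (1 + v)"
    using assms by (simp add: Theta_def powr_powr)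
  moreover have "1 - 2 * v / (1 + v) = (1 - v) / (1 + v)"
    using assms by (simp add: field_simps)
  ultimately have "pq_weight (6/5) (3/2) (Theta v) = ((1 - v) / (1 + v)) powr (-5/6)"
    by (simp add: pq_weight_6_5_3_2)
  then have "(pq_weight (6/5) (3/2) (Theta v) * Theta_deriv v) ^ 6
      = (1 + v)^5 / (1 - v)^5 * ((4/3)^6 * (1 + v)^2 / (2 * v)^2 / (1 + v)^12)"
    using assms
    by (simp add: Theta_deriv_def power_mult_distrib power_divide powr_power powr_neg_numeral)
  also have "\<dots> = ((2/3) * 2 powr (2/3) * Theta_weight v) ^ 6"
  proof -
    have "0 < 1 - v^2"
      using assms by (simp add: power_less_one_iff)
    moreover have "1 - v^2 = (1 - v) * (1 + v)"
      by (simp add: power2_eq_square algebra_simps)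
    ultimately show ?thesis
      using assms
      by (simp add: Theta_weight_def power_mult_distrib power_divide powr_power powr_neg_numeral)
        (simp add: field_simps)
  qed
  finally show "(pq_weight (6/5) (3/2) (Theta v) * Theta_deriv v) ^ 6 = \<dots>" .
qed (use assms in \<open>simp_all add: pq_weight_6_5_3_2 Theta_deriv_def Theta_weight_def\<close>)

definition Phi_rad :: "real \<Rightarrow> real" where
  "Phi_rad z = z * (3 * z + 1)^3 * (1 - z)"

definition Phi_den :: "real \<Rightarrow> real" where
  "Phi_den z = 16 * z + (3 * z + 1)^3 * (1 - z)"

lemma Phi_eq: "Phi z = 8 * sqrt (Phi_rad z) / Phi_den z"
  by (simp add: Phi_def Phi_rad_def Phi_den_def)

lemma Phi_rad_pos: "0 < z \<Longrightarrow> z < 1 \<Longrightarrow> 0 < Phi_rad z"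
  by (simp add: Phi_rad_def)

lemma Phi_den_pos:
  assumes "0 \<le> z" "z \<le> 1"
  shows "0 < Phi_den z"
proof (cases "z = 0")
  case False
  then have "0 < 16 * z"
    using assms by simp
  moreover have "0 \<le> (3 * z + 1)^3 * (1 - z)"
    using assms by simp
  ultimately show ?thesis
    by (simp add: Phi_den_def)
qed (simp add: Phi_den_def)

lemma one_minus_Phi_sq:
  assumes "0 \<le> z" "z \<le> 1"
  shows "1 - (Phi z)^2 = ((3 * z - 1)^3 * (z + 1) / Phi_den z)^2"
proof -
  have "(Phi z)^2 = 64 * Phi_rad z / (Phi_den z)^2"
    using assms by (simp add: Phi_eq Phi_rad_def power_divide power_mult_distrib)
  then have "1 - (Phi z)^2 = ((Phi_den z)^2 - 64 * Phi_rad z) / (Phi_den z)^2"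
    using Phi_den_pos[OF assms] by (simp add: field_simps)
  also have "(Phi_den z)^2 - 64 * Phi_rad z = ((3 * z - 1)^3 * (z + 1))^2"
    by (simp add: Phi_den_def Phi_rad_def algebra_simps eval_nat_numeral)
  finally show ?thesis
    by (simp add: power_divide)
qed

lemma Phi_nonneg: "0 \<le> z \<Longrightarrow> z \<le> 1 \<Longrightarrow> 0 \<le> Phi z"
  using Phi_den_pos[of z] by (simp add: Phi_eq Phi_rad_def)

lemma Phi_pos: "0 < z \<Longrightarrow> z < 1 \<Longrightarrow> 0 < Phi z"
  unfolding Phi_eq using Phi_den_pos[of z] Phi_rad_pos[of z] by (intro divide_pos_pos) auto

lemma Phi_le_one:
  assumes "0 \<le> z" "z \<le> 1"
  shows "Phi z \<le> 1"
proof -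
  have "0 \<le> 1 - (Phi z)^2"
    unfolding one_minus_Phi_sq[OF assms] by simp
  then have "(Phi z)^2 \<le> 1^2"
    by simp
  then show ?thesis
    by (rule power2_le_imp_le) simp
qed

lemma Phi_less_one:
  assumes "0 \<le> z" "z \<le> 1" "z \<noteq> 1/3"
  shows "Phi z < 1"
proof -
  have "0 < 1 - (Phi z)^2"
    unfolding one_minus_Phi_sq[OF assms(1,2)] using Phi_den_pos[OF assms(1,2)] assms by simp
  then have "(Phi z)^2 < 1^2"
    by simp
  then show ?thesis
    by (rule power2_less_imp_less) simp
qed

lemma Phi_one_third: "Phi (1/3) = 1"
proof -
  have "sqrt (16/9) = 4/3"
    by (simp add: real_sqrt_divide)
  then show ?thesis
    by (simp add: Phi_def)
qed

lemma Phi_one: "Phi 1 = 0"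
  by (simp add: Phi_def)

lemma continuous_on_Phi: "continuous_on {0..1} Phi"
  unfolding Phi_eq[abs_def] Phi_rad_def Phi_den_def
  by (intro continuous_intros) (use Phi_den_pos in \<open>fastforce simp: Phi_den_def\<close>)

definition Phi_deriv :: "real \<Rightarrow> real" where
  "Phi_deriv z = - (4 * (1 + z) * (3 * z + 1)^2 * (3 * z - 1)^5) / ((Phi_den z)^2 * sqrt (Phi_rad z))"

lemma Phi_has_derivative:
  assumes "0 < z" "z < 1"
  shows "(Phi has_real_derivative Phi_deriv z) (at z)"
proof -
  define R D where "R = Phi_rad z" and "D = Phi_den z"
  define R' where "R' = (3 * z + 1)^3 * (1 - z) + 9 * z * (3 * z + 1)^2 * (1 - z) - z * (3 * z + 1)^3"
  define D' where "D' = 16 + 9 * (3 * z + 1)^2 * (1 - z) - (3 * z + 1)^3"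
  have R: "0 < R" and D: "0 < D"
    using assms Phi_rad_pos Phi_den_pos by (auto simp: R_def D_def)
  have "(Phi_rad has_real_derivative R') (at z)"
    unfolding Phi_rad_def[abs_def] R'_def
    by (rule derivative_eq_intros refl | simp)+ (simp add: algebra_simps eval_nat_numeral)
  moreover have "(Phi_den has_real_derivative D') (at z)"
    unfolding Phi_den_def[abs_def] D'_def
    by (rule derivative_eq_intros refl | simp)+
  ultimately have "((\<lambda>z. 8 * sqrt (Phi_rad z) / Phi_den z) has_real_derivative
      (8 * (inverse (sqrt R) / 2 * R') * D - 8 * sqrt R * D') / (D * D)) (at z)"
    using R D unfolding R_def D_def
    by (intro DERIV_divide DERIV_cmult DERIV_chain2[OF DERIV_real_sqrt]) auto
  moreover have "(8 * (inverse (sqrt R) / 2 * R') * D - 8 * sqrt R * D') / (D * D) = Phi_deriv z"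
  proof -
    have "R' * D - 2 * R * D' = - ((1 + z) * (3 * z + 1)^2 * (3 * z - 1)^5)"
      by (simp add: R'_def D'_def R_def D_def Phi_rad_def Phi_den_def algebra_simps eval_nat_numeral)
    moreover have "(8 * (inverse (sqrt R) / 2 * R') * D - 8 * sqrt R * D') / (D * D)
        = 4 * (R' * D - 2 * R * D') / (D^2 * sqrt R)"
      using R D by (simp add: field_simps power2_eq_square)
    ultimately show ?thesis
      by (simp add: Phi_deriv_def R_def D_def)
  qed
  ultimately show ?thesis
    by (simp add: Phi_eq[abs_def])
qed

definition Phi_weight :: "real \<Rightarrow> real" where
  "Phi_weight z = z powr (-2/3) * (1 - z^2) powr (-2/3)"

lemma Phi_pullback:
  assumes "1/3 < z" "z < 1"
  shows "Theta_weight (Phi z) * Phi_deriv z = -2 * Phi_weight z"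
proof -
  define v D R where "v = Phi z" and "D = Phi_den z" and "R = Phi_rad z"
  define p q r y where "p = 3 * z - 1" and "q = 1 + z" and "r = 3 * z + 1" and "y = 1 - z"
  have pos: "0 < v" "0 < D" "0 < R" "0 < p" "0 < q" "0 < r" "0 < y" "0 < z"
    using assms Phi_pos Phi_den_pos Phi_rad_pos by (auto simp: v_def D_def R_def p_def q_def r_def y_def)
  have v2: "v^2 = 64 * R / D^2"
    using pos by (simp add: v_def Phi_eq R_def D_def power_divide power_mult_distrib)
  have one_minus_v2: "1 - v^2 = (p^3 * q / D)^2"
    using one_minus_Phi_sq[of z] assms by (simp add: v_def p_def q_def D_def add.commute)
  have R_eq: "R = z * r^3 * y"
    by (simp add: R_def Phi_rad_def r_def y_def)
  have one_minus_z2: "1 - z^2 = y * q"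
    by (simp add: y_def q_def algebra_simps power2_eq_square)
  have minus_deriv: "- Phi_deriv z = 4 * q * r^2 * p^5 / (D^2 * sqrt R)"
    by (simp add: Phi_deriv_def p_def q_def r_def D_def R_def)
  have "Theta_weight v * (- Phi_deriv z) = 2 * Phi_weight z"
  proof (rule power_eq_imp_eq_base[of _ 6])
    have "(Theta_weight v * (- Phi_deriv z))^6
        = 1 / v^2 * (1 / (1 - v^2)^5) * (4 * q * r^2 * p^5)^6 / (D^12 * R^3)"
    proof -
      have "(sqrt R)^6 = ((sqrt R)^2)^3"
        by (simp flip: power_mult)
      then have "(sqrt R)^6 = R^3"
        using pos by simp
      moreover have "0 < 1 - v^2"
        using pos by (simp add: one_minus_v2)
      ultimately show ?thesis
        using pos unfolding Theta_weight_def minus_deriv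
        by (simp add: power_mult_distrib power_divide powr_power powr_neg_numeral)
    qed
    also have "\<dots> = 64 * r^12 / (q^4 * R^4)"
      unfolding one_minus_v2 unfolding v2 using pos
      by (simp add: field_simps power_mult_distrib power_divide flip: power_add power_mult)
        (simp add: eval_nat_numeral)
    also have "\<dots> = 64 / (z^4 * (y * q)^4)"
      unfolding R_eq using pos
      by (simp add: field_simps power_mult_distrib flip: power_add power_mult)
    also have "\<dots> = (2 * Phi_weight z)^6"
      unfolding Phi_weight_def one_minus_z2 using pos
      by (simp add: power_mult_distrib powr_power powr_neg_numeral)
    finally show "(Theta_weight v * (- Phi_deriv z))^6 = (2 * Phi_weight z)^6" .
  qed (use pos one_minus_v2 in \<open>simp_all add: Theta_weight_def Phi_weight_def minus_deriv\<close>)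
  then show ?thesis
    by (simp add: v_def)
qed

definition Psi_cos :: "real \<Rightarrow> real" where
  "Psi_cos s = 2 * sqrt (1 - s powr (3/2)) / (2 - s powr (3/2))"

lemma Psi_eq_Psi_cos:
  assumes "0 \<le> s" "s < 1"
  shows "Psi ((1 - s powr (3/2)) powr (5/6)) = Psi_cos s"
proof -
  have "0 < 1 - s powr (3/2)"
    using powr01_less_one[of s "3/2"] assms by (cases "s = 0") auto
  then show ?thesis
    by (simp add: Psi_def Psi_cos_def powr_powr powr_half_sqrt)
qed

lemma Psi_cos_bounds:
  assumes "0 \<le> s" "s \<le> 1"
  shows "0 \<le> Psi_cos s" "Psi_cos s \<le> 1"
proof -
  define w a where "w = s powr (3/2)" and "a = sqrt (1 - w)"
  have w: "w \<le> 1"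
    using assms powr_mono2[of "3/2" s 1] by (simp add: w_def)
  then have "0 \<le> a" "a^2 = 1 - w"
    by (simp_all add: a_def)
  moreover have "2 * a \<le> 1 + a^2"
    using sum_squares_bound[of a 1] by simp
  ultimately show "0 \<le> Psi_cos s" "Psi_cos s \<le> 1"
    using w by (simp_all add: Psi_cos_def flip: a_def w_def)
qed

lemma Psi_cos_less_one:
  assumes "0 < s" "s \<le> 1"
  shows "Psi_cos s < 1"
proof -
  define w a where "w = s powr (3/2)" and "a = sqrt (1 - w)"
  have w: "0 < w" "w \<le> 1"
    using assms powr_mono2[of "3/2" s 1] by (simp_all add: w_def)
  then have "a^2 = 1 - w" "a \<noteq> 1"
    by (simp_all add: a_def)
  have "0 < (a - 1)^2"
    using \<open>a \<noteq> 1\<close> by simp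
  then have "2 * a < 1 + a^2"
    by (simp add: power2_eq_square algebra_simps)
  with \<open>a^2 = 1 - w\<close> w show ?thesis
    by (simp add: Psi_cos_def flip: a_def w_def)
qed

lemma continuous_on_Psi_cos: "continuous_on {0..1} Psi_cos"
proof -
  have "s powr (3/2) \<le> 1" if "s \<in> {0..1}" for s :: real
    using that powr_mono2[of "3/2" s 1] by simp
  then show ?thesis
    unfolding Psi_cos_def[abs_def]
    by (intro continuous_on_powr' continuous_intros) force+
qed

definition Psi_cos_deriv :: "real \<Rightarrow> real" where
  "Psi_cos_deriv s = - 3 * s^2 / (2 * sqrt (1 - s powr (3/2)) * (2 - s powr (3/2))^2)"

lemma Psi_cos_has_derivative:
  assumes "0 < s" "s < 1"
  shows "(Psi_cos has_real_derivative Psi_cos_deriv s) (at s)"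
proof -
  define w a where "w = s powr (3/2)" and "a = sqrt (1 - w)"
  define w' where "w' = (3/2) * s powr (1/2)"
  have w: "0 < w" "w < 1"
    using assms powr01_less_one[of s "3/2"] by (auto simp: w_def)
  have a: "0 < a" "w = 1 - a * a"
    using w by (auto simp: a_def)
  have w'w: "w' * w = (3/2) * s^2"
    using assms by (simp add: w'_def w_def flip: powr_add)
  have dw: "((\<lambda>s. s powr (3/2)) has_real_derivative w') (at s)"
  proof -
    have "(3/2::real) - 1 = 1/2"
      by simp
    then show ?thesis
      using has_real_derivative_powr[OF assms(1), of "3/2"] by (simp only: w'_def)
  qed
  have da: "((\<lambda>s. sqrt (1 - s powr (3/2))) has_real_derivative - w' / (2 * a)) (at s)"
  proof -
    have pos: "0 < 1 - s powr (3/2)"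
      using w by (simp add: w_def)
    show ?thesis
      by (rule DERIV_cong[OF DERIV_chain2[OF DERIV_real_sqrt[OF pos] DERIV_diff[OF DERIV_const dw]]])
        (use a in \<open>simp add: a_def w_def field_simps\<close>)
  qed
  have "(2 * (- w' / (2 * a)) * (2 - w) - 2 * a * (0 - w')) / ((2 - w) * (2 - w))
      = - (w' * w) / (a * (2 - w)^2)"
    using a by (simp add: field_simps power2_eq_square) algebra
  also have "\<dots> = Psi_cos_deriv s"
    unfolding Psi_cos_deriv_def w_def[symmetric] a_def[symmetric] w'w by simp
  finally have deriv_eq: "(2 * (- w' / (2 * a)) * (2 - w) - 2 * a * (0 - w')) / ((2 - w) * (2 - w))
      = Psi_cos_deriv s" .
  have "2 - s powr (3/2) \<noteq> 0"
    using w by (simp add: w_def)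
  then show ?thesis
    unfolding Psi_cos_def[abs_def]
    by (rule DERIV_cong[OF DERIV_divide[OF DERIV_cmult[OF da] DERIV_diff[OF DERIV_const dw]]])
      (use deriv_eq in \<open>simp only: w_def a_def\<close>)
qed

lemma Psi_cos_pullback:
  assumes "0 < s" "s < 1"
  shows "Phi_weight (Psi_cos s) * Psi_cos_deriv s = - (3/2) * 2 powr (-2/3) * pq_weight (6/5) (3/2) s"
proof -
  define w a z where "w = s powr (3/2)" and "a = sqrt (1 - w)" and "z = Psi_cos s"
  have w: "0 < w" "w < 1"
    using assms powr01_less_one[of s "3/2"] by (auto simp: w_def)
  have a: "0 < a" "a^2 = 1 - w"
    using w by (auto simp: a_def)
  have z: "z = 2 * a / (2 - w)"
    by (simp add: z_def Psi_cos_def a_def w_def)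
  have "1 - z^2 = ((2 - w)^2 - (2 * a)^2) / (2 - w)^2"
    using w unfolding z by (simp add: field_simps)
  also have "(2 - w)^2 - (2 * a)^2 = w^2"
    using a(2) by algebra
  finally have one_minus_z2: "1 - z^2 = (w / (2 - w))^2"
    by (simp add: power_divide)
  have z_pos: "0 < z" "0 < 1 - z^2"
    using a w unfolding one_minus_z2 by (simp_all add: z)
  have w8: "w^8 = s^12"
    using assms by (simp add: w_def powr_power)
  have minus_deriv: "- Psi_cos_deriv s = 3 * s^2 / (2 * a * (2 - w)^2)"
    by (simp add: Psi_cos_deriv_def a_def w_def)
  have "Phi_weight z * (- Psi_cos_deriv s) = (3/2) * 2 powr (-2/3) * pq_weight (6/5) (3/2) s"
  proof (rule power_eq_imp_eq_base[of _ 6])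
    have "(Phi_weight z * (- Psi_cos_deriv s))^6
        = 1 / z^4 * (1 / (1 - z^2)^4) * ((3 * s^2)^6 / (2 * a * (2 - w)^2)^6)"
      using z_pos unfolding Phi_weight_def minus_deriv
      by (simp add: power_mult_distrib power_divide powr_power powr_neg_numeral)
    also have "\<dots> = 3^6 / (2^10 * (a^2)^5)"
      unfolding one_minus_z2 unfolding z using a w w8 assms
      by (simp add: field_simps power_mult_distrib power_divide flip: power_add power_mult)
    also have "\<dots> = ((3/2) * 2 powr (-2/3) * pq_weight (6/5) (3/2) s)^6"
      using a unfolding pq_weight_6_5_3_2 w_def[symmetric] a(2)[symmetric]
      by (simp add: power_mult_distrib power_divide powr_power powr_neg_numeral)
    finally show "(Phi_weight z * (- Psi_cos_deriv s))^6 = \<dots>" .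
  qed (use a w z_pos in \<open>simp_all add: Phi_weight_def minus_deriv pq_weight_6_5_3_2\<close>)
  then show ?thesis
    by (simp add: z_def)
qed

section \<open>The doubling formula\<close>

text \<open>The point where \<open>Psi_cos\<close> equals \<open>1/3\<close>; it is \<open>sin_pq (pi_pq / 4)\<close>.\<close>

definition quarter_point :: real where
  "quarter_point = (12 * sqrt 2 - 16) powr (2/3)"

lemma sqrt_2_bounds: "4/3 < sqrt (2::real)" "sqrt (2::real) < 17/12"
proof -
  have "sqrt ((4/3)^2) < sqrt (2::real)" "sqrt (2::real) < sqrt ((17/12)^2)"
    by (intro real_sqrt_less_mono; simp add: power2_eq_square)+
  then show "4/3 < sqrt (2::real)" "sqrt (2::real) < 17/12"
    by simp_all
qed

lemma quarter_point_bounds: "0 < quarter_point" "quarter_point < 1"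
proof -
  have "0 < 12 * sqrt 2 - 16" "12 * sqrt 2 - 16 < (1::real)"
    using sqrt_2_bounds by auto
  then show "0 < quarter_point" "quarter_point < 1"
    unfolding quarter_point_def using powr_less_mono2[of "2/3" "12 * sqrt 2 - 16" 1] by auto
qed

lemma quarter_point_powr: "quarter_point powr (3/2) = 12 * sqrt 2 - 16"
  using sqrt_2_bounds by (simp add: quarter_point_def powr_powr)

lemma sqrt_one_minus_quarter_point_powr: "sqrt (1 - quarter_point powr (3/2)) = 3 - 2 * sqrt 2"
proof -
  have "1 - quarter_point powr (3/2) = (3 - 2 * sqrt 2)^2"
    by (simp add: quarter_point_powr power2_eq_square algebra_simps)
  then show ?thesis
    using sqrt_2_bounds by simp
qed

lemma Psi_cos_quarter_point: "Psi_cos quarter_point = 1/3"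
proof -
  have "2 - quarter_point powr (3/2) = 6 * (3 - 2 * sqrt 2)"
    by (simp add: quarter_point_powr)
  moreover have "3 - 2 * sqrt 2 \<noteq> (0::real)"
    using sqrt_2_bounds by simp
  ultimately show ?thesis
    by (simp add: Psi_cos_def sqrt_one_minus_quarter_point_powr)
qed

lemma Psi_cos_gt_one_third:
  assumes "0 \<le> s" "s < quarter_point"
  shows "1/3 < Psi_cos s"
proof -
  define w a where "w = s powr (3/2)" and "a = sqrt (1 - w)"
  have "w < quarter_point powr (3/2)"
    using assms by (simp add: w_def powr_less_mono2)
  then have "3 - 2 * sqrt 2 < a"
    unfolding a_def sqrt_one_minus_quarter_point_powr[symmetric] by (simp add: real_sqrt_less_mono)
  moreover have "a \<le> 1" "a^2 = 1 - w" "w < 1"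
    using \<open>w < quarter_point powr (3/2)\<close> quarter_point_powr sqrt_2_bounds
    by (auto simp: a_def w_def)
  ultimately have "0 < (a - (3 - 2 * sqrt 2)) * ((3 + 2 * sqrt 2) - a)"
    using sqrt_2_bounds by (intro mult_pos_pos) auto
  also have "\<dots> = 6 * a - (2 - w)"
    using \<open>a^2 = 1 - w\<close> by (simp add: algebra_simps power2_eq_square)
  finally show ?thesis
    using \<open>w < 1\<close> by (simp add: Psi_cos_def field_simps flip: a_def w_def)
qed

definition double_sin :: "real \<Rightarrow> real" where
  "double_sin s = Theta (Phi (Psi_cos s))"

lemma double_sin_bounds:
  assumes "0 \<le> s" "s \<le> 1"
  shows "0 \<le> double_sin s" "double_sin s \<le> 1"
  using Psi_cos_bounds[OF assms] Phi_nonneg Phi_le_one Theta_bounds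
  by (simp_all add: double_sin_def)

lemma double_sin_strict_bounds:
  assumes "0 < s" "s < quarter_point"
  shows "0 < double_sin s" "double_sin s < 1"
proof -
  have z: "1/3 < Psi_cos s" "Psi_cos s < 1"
    using Psi_cos_gt_one_third Psi_cos_less_one assms quarter_point_bounds by auto
  then have "0 < Phi (Psi_cos s)" "Phi (Psi_cos s) < 1"
    using Phi_pos Phi_less_one by auto
  then show "0 < double_sin s" "double_sin s < 1"
    using Theta_strict_bounds by (simp_all add: double_sin_def)
qed

lemma continuous_on_double_sin: "continuous_on {0..1} double_sin"
proof -
  have "continuous_on {0..1} (\<lambda>s. Phi (Psi_cos s))"
    by (rule continuous_on_compose2[OF continuous_on_Phi continuous_on_Psi_cos])
      (use Psi_cos_bounds in auto)
  then show ?thesis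
    unfolding double_sin_def[abs_def]
    by (rule continuous_on_compose2[OF continuous_on_Theta])
      (use Psi_cos_bounds Phi_nonneg Phi_le_one in auto)
qed

lemma double_sin_has_derivative:
  assumes "0 < s" "s < quarter_point"
  shows "(double_sin has_real_derivative
           Theta_deriv (Phi (Psi_cos s)) * (Phi_deriv (Psi_cos s) * Psi_cos_deriv s)) (at s)"
proof -
  have "1/3 < Psi_cos s" "Psi_cos s < 1" "s < 1"
    using Psi_cos_gt_one_third Psi_cos_less_one assms quarter_point_bounds by auto
  then have "0 < Phi (Psi_cos s)"
    by (intro Phi_pos) auto
  with \<open>1/3 < Psi_cos s\<close> \<open>Psi_cos s < 1\<close> \<open>s < 1\<close> show ?thesis
    unfolding double_sin_def[abs_def]
    by (intro DERIV_chain2[OF Theta_has_derivative] DERIV_chain2[OF Phi_has_derivative]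
        Psi_cos_has_derivative assms) auto
qed

lemma double_sin_pullback:
  assumes "0 < s" "s < quarter_point"
  shows "pq_weight (6/5) (3/2) (double_sin s)
           * (Theta_deriv (Phi (Psi_cos s)) * (Phi_deriv (Psi_cos s) * Psi_cos_deriv s))
         = 2 * pq_weight (6/5) (3/2) s"
proof -
  define z v where "z = Psi_cos s" and "v = Phi z"
  have "1/3 < z" "z < 1" "s < 1"
    using Psi_cos_gt_one_third Psi_cos_less_one assms quarter_point_bounds by (auto simp: z_def)
  moreover from this have "0 < v" "v < 1"
    using Phi_pos Phi_less_one by (auto simp: v_def)
  ultimately have Theta: "pq_weight (6/5) (3/2) (Theta v) * Theta_deriv v = (2/3) * 2 powr (2/3) * Theta_weight v"
    and Phi: "Theta_weight v * Phi_deriv z = -2 * Phi_weight z"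
    and Psi: "Phi_weight z * Psi_cos_deriv s = - (3/2) * 2 powr (-2/3) * pq_weight (6/5) (3/2) s"
    using Theta_pullback Phi_pullback Psi_cos_pullback assms by (auto simp: v_def z_def)
  have "pq_weight (6/5) (3/2) (double_sin s) * (Theta_deriv v * (Phi_deriv z * Psi_cos_deriv s))
      = (pq_weight (6/5) (3/2) (Theta v) * Theta_deriv v) * (Phi_deriv z * Psi_cos_deriv s)"
    by (simp add: double_sin_def v_def z_def)
  also have "\<dots> = (2/3) * 2 powr (2/3) * ((Theta_weight v * Phi_deriv z) * Psi_cos_deriv s)"
    unfolding Theta by (simp only: mult.assoc)
  also have "\<dots> = - (4/3) * 2 powr (2/3) * (Phi_weight z * Psi_cos_deriv s)"
    unfolding Phi by simp
  also have "\<dots> = 2 * (2 powr (2/3) * 2 powr (-2/3)) * pq_weight (6/5) (3/2) s"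
    unfolding Psi by simp
  also have "\<dots> = 2 * pq_weight (6/5) (3/2) s"
    by (simp flip: powr_add)
  finally show ?thesis
    by (simp add: v_def z_def)
qed

lemma F_pq_double_sin:
  assumes "0 \<le> s" "s \<le> quarter_point"
  shows "F_pq (6/5) (3/2) (double_sin s) = 2 * F_pq (6/5) (3/2) s"
proof (rule F_pq_comp_eq_mult)
  show "double_sin ` {0..quarter_point} \<subseteq> {0..1}"
    using double_sin_bounds quarter_point_bounds by fastforce
  show "continuous_on {0..quarter_point} double_sin"
    by (rule continuous_on_subset[OF continuous_on_double_sin]) (use quarter_point_bounds in auto)
  show "double_sin 0 = 0"
    by (simp add: double_sin_def Psi_cos_def Phi_one Theta_def)
qed (use assms quarter_point_bounds double_sin_strict_bounds double_sin_has_derivative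
       double_sin_pullback in auto)

theorem theorem4p4:
  fixes x :: real
  assumes "0 \<le> x" and "x < pi_pq (6/5) (3/2) / 4"
  shows "sin_pq (6/5) (3/2) (2 * x) = (Theta \<circ> Phi \<circ> Psi) (cos_pq (6/5) (3/2) x)"
proof -
  let ?F = "F_pq (6/5) (3/2)"
  have half_period: "?F 1 = pi_pq (6/5) (3/2) / 2"
    by (simp add: pi_pq_eq_F_pq)
  obtain s where s: "0 \<le> s" "s < 1" "?F s = x"
    using assms F_pq_image[of "6/5" "3/2"] by (force simp: image_iff)
  have "double_sin quarter_point = 1"
    by (simp add: double_sin_def Psi_cos_quarter_point Phi_one_third Theta_def)
  then have "?F quarter_point = pi_pq (6/5) (3/2) / 4"
    using F_pq_double_sin[of quarter_point] quarter_point_bounds half_period by simp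
  moreover have "strict_mono_on {0..1} ?F"
    by (rule F_pq_strict_mono) simp_all
  ultimately have "s < quarter_point"
    using strict_mono_on_less[of "{0..1}" ?F s quarter_point] s assms quarter_point_bounds by simp
  then have doubled: "?F (double_sin s) = 2 * x"
    using F_pq_double_sin s by simp
  have "0 \<le> double_sin s" "double_sin s < 1"
    using double_sin_bounds[of s] s doubled assms half_period by (auto simp: le_less)
  then have "sin_pq (6/5) (3/2) (2 * x) = double_sin s"
    using sin_pq_F_pq[of "6/5" "3/2" "double_sin s"] doubled by simp
  moreover have "Psi (cos_pq (6/5) (3/2) x) = Psi_cos s"
    using cos_pq_F_pq[of "6/5" "3/2" s] Psi_eq_Psi_cos[of s] s by simp
  ultimately show ?thesis
    by (simp add: double_sin_def)
qed

end
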